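(* Let $G=(V,E)$ be an undirected unweighted graph with $n$ vertices, let $f$ be a positive integer with $n>f$, and let $c\ge1$ be a constant. Let $A_0=V$ and, for $i=1,\dots,f-1$, let $A_i$ be obtained by including each vertex independently with probability $p_i=\min((c+3)n^{-i/f}\log n,1)$ (all choices independent). Say the sampling is good if (1) for every $i\in\{1,\dots,f-1\}$ and every $v\in V$, $Q_i(v)\cap A_i\neq\emptyset$, and (2) for every $i\in\{0,\dots,f-1\}$ and every $v\in V$, $|Q_{i+1}(v)\cap A_i|\le\lceil 12(c+3)n^{1/f}\log n\rceil$. Then the sampling is good with probability at least $1-n^{-c}$.
   Context: Logarithms are base $2$. Vertices have distinct identifiers $ID(\cdot)$ and $d(\cdot,\cdot)$ is hop distance. A vertex $x$ is closer to $v$ than $y$ if $d(v,x)<d(v,y)$, or $d(v,x)=d(v,y)$ and $ID(x)<ID(y)$. For $i\in\{1,\dots,f\}$ and $v\in V$, $Q_i(v)$ is the set of the $\lceil n^{i/f}\rceil$ vertices closest to $v$ in $G$. *)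

theory Defs
  imports "HOL-Probability.Probability"
begin

definition hop_dist :: "('a \<Rightarrow> 'a \<Rightarrow> bool) \<Rightarrow> 'a \<Rightarrow> 'a \<Rightarrow> enat" where
  "hop_dist E u w = (if \<exists>k. (E ^^ k) u w then enat (LEAST k. (E ^^ k) u w) else \<infinity>)"

definition closer :: "('a \<Rightarrow> 'a \<Rightarrow> bool) \<Rightarrow> ('a \<Rightarrow> nat) \<Rightarrow> 'a \<Rightarrow> 'a \<Rightarrow> 'a \<Rightarrow> bool" where
  "closer E ID v x y \<longleftrightarrow> hop_dist E v x < hop_dist E v y \<or>
     (hop_dist E v x = hop_dist E v y \<and> ID x < ID y)"

text \<open>Q_i(v): the ceil(n^(i/f)) vertices closest to v, i.e. those with fewer than
  ceil(n^(i/f)) vertices strictly closer to v.\<close>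
definition Qset :: "'a set \<Rightarrow> ('a \<Rightarrow> 'a \<Rightarrow> bool) \<Rightarrow> ('a \<Rightarrow> nat) \<Rightarrow> nat \<Rightarrow> nat \<Rightarrow> 'a \<Rightarrow> 'a set" where
  "Qset V E ID f i v = {x \<in> V. card {y \<in> V. closer E ID v y x}
      < nat \<lceil>real (card V) powr (real i / real f)\<rceil>}"

definition samp_prob :: "nat \<Rightarrow> nat \<Rightarrow> real \<Rightarrow> nat \<Rightarrow> real" where
  "samp_prob n f c i = min ((c + 3) * real n powr (- real i / real f) * log 2 (real n)) 1"

definition Aset :: "'a set \<Rightarrow> (nat \<times> 'a \<Rightarrow> bool) \<Rightarrow> nat \<Rightarrow> 'a set" where
  "Aset V \<omega> i = (if i = 0 then V else {v \<in> V. \<omega> (i, v)})"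

definition sampling :: "'a set \<Rightarrow> nat \<Rightarrow> real \<Rightarrow> (nat \<times> 'a \<Rightarrow> bool) pmf" where
  "sampling V f c = Pi_pmf ({1..<f} \<times> V) False
      (\<lambda>(i, v). bernoulli_pmf (samp_prob (card V) f c i))"

definition good_sampling ::
  "'a set \<Rightarrow> ('a \<Rightarrow> 'a \<Rightarrow> bool) \<Rightarrow> ('a \<Rightarrow> nat) \<Rightarrow> nat \<Rightarrow> real \<Rightarrow> (nat \<times> 'a \<Rightarrow> bool) \<Rightarrow> bool" where
  "good_sampling V E ID f c \<omega> \<longleftrightarrow>
     (\<forall>i\<in>{1..<f}. \<forall>v\<in>V. Qset V E ID f i v \<inter> Aset V \<omega> i \<noteq> {}) \<and>
     (\<forall>i\<in>{0..<f}. \<forall>v\<in>V. real (card (Qset V E ID f (i + 1) v \<inter> Aset V \<omega> i))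
        \<le> real_of_int \<lceil>12 * (c + 3) * real (card V) powr (1 / real f) * log 2 (real (card V))\<rceil>)"

end

theory Submission
  imports Defs
begin

text \<open>Write n = |V| and p_i for the sampling probability of level i. For every level
  i \<ge> 1 and vertex v, two bad events have probability at most n^-(c+3) each. Since
  |Q_i(v)| \<ge> n^(i/f), the set Q_i(v) misses A_i with probability
  (1 - p_i)^|Q_i(v)| \<le> exp(-(c+3) log n), unless p_i = 1 and it cannot miss at all. Since
  |Q_(i+1)(v)| \<le> 2 n^((i+1)/f), the expected size \<mu> of Q_(i+1)(v) \<inter> A_i is at most
  2 (c+3) n^(1/f) log n, and by a union bound over t-subsets the intersection has t \<ge> 6\<mu>
  elements with probability at most C(|Q_(i+1)(v)|, t) p_i^t \<le> 2^-t. At level 0 the load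
  bound holds for every outcome, as |Q_1(v)| \<le> 2 n^(1/f). A union bound over the fewer
  than n^2 pairs (i, v) leaves failure probability at most 2 n^2 n^-(c+3) \<le> n^-c.\<close>

lemma power_div_fact_le_exp:
  fixes x :: real
  assumes "x \<ge> 0"
  shows "x ^ k / fact k \<le> exp x"
proof -
  have "(\<lambda>n. x ^ n /\<^sub>R fact n) sums exp x" by (rule exp_converges)
  then have "(\<Sum>n\<in>{k}. x ^ n /\<^sub>R fact n) \<le> (\<Sum>n. x ^ n /\<^sub>R fact n)"
    using assms by (intro sum_le_suminf) (auto simp: sums_iff)
  then show ?thesis
    using \<open>(\<lambda>n. x ^ n /\<^sub>R fact n) sums exp x\<close> by (simp add: sums_iff divide_inverse mult.commute)
qed

lemma binomial_mult_power_le_half_power: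
  fixes p :: real
  assumes "p \<ge> 0" and "6 * (real k * p) \<le> real t"
  shows "real (k choose t) * p ^ t \<le> (1 / 2) ^ t"
proof (cases "t = 0")
  case False
  \<comment> \<open>C(k,t) p^t \<le> (k p)^t / t! \<le> (e k p / t)^t, using t^t / t! \<le> e^t\<close>
  define \<mu> where "\<mu> = real k * p"
  have "\<mu> \<ge> 0" "real t > 0" using assms False by (auto simp: \<mu>_def)
  have choose_fact: "real (k choose t) * fact t \<le> real k ^ t"
    using binomial_fact_pow[of k t] by (metis of_nat_fact of_nat_le_iff of_nat_mult of_nat_power)
  then have "real (k choose t) * p ^ t \<le> \<mu> ^ t / fact t"
    using mult_right_mono[OF choose_fact, of "p ^ t"] assms
    by (simp add: \<mu>_def power_mult_distrib field_simps)
  also have "\<dots> = (\<mu> / real t) ^ t * (real t ^ t / fact t)"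
    using \<open>real t > 0\<close> by (simp add: power_divide)
  also have "\<dots> \<le> (\<mu> / real t) ^ t * exp 1 ^ t"
    using \<open>\<mu> \<ge> 0\<close> power_div_fact_le_exp[of "real t" t]
    by (intro mult_left_mono) (auto simp: exp_of_nat_mult[symmetric])
  also have "\<dots> = (\<mu> / real t * exp 1) ^ t" by (rule power_mult_distrib[symmetric])
  also have "\<dots> \<le> (1 / 2) ^ t"
  proof (rule power_mono)
    have "\<mu> / real t \<le> 1 / 6" using assms \<open>real t > 0\<close> by (simp add: \<mu>_def divide_le_eq)
    moreover have "exp 1 \<le> (3::real)" using e_less_272 by simp
    ultimately show "\<mu> / real t * exp 1 \<le> 1 / 2"
      using \<open>\<mu> \<ge> 0\<close> \<open>real t > 0\<close> mult_mono[of "\<mu> / real t" "1/6" "exp 1" 3] by simp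
  qed (use \<open>\<mu> \<ge> 0\<close> in simp)
  finally show ?thesis .
qed simp

lemma half_power_le_powr:
  fixes n a :: real
  assumes "n > 0" and "a * log 2 n \<le> real t"
  shows "(1 / 2) ^ t \<le> n powr (- a)"
proof -
  have "(1 / 2) ^ t = (2::real) powr (- real t)"
    by (simp add: powr_minus powr_realpow power_one_over inverse_eq_divide)
  also have "\<dots> \<le> 2 powr (log 2 n * (- a))"
    using assms by (intro powr_mono) (auto simp: algebra_simps)
  also have "\<dots> = (2 powr log 2 n) powr (- a)"
    by (rule powr_powr[symmetric])
  also have "\<dots> = n powr (- a)"
    using assms by simp
  finally show ?thesis .
qed

lemma exp_neg_mult_log_le_powr:
  fixes n a :: real
  assumes "n \<ge> 1" and "a \<ge> 0"
  shows "exp (- (a * log 2 n)) \<le> n powr (- a)"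
proof -
  have "ln n \<le> log 2 n"
    using assms ln_le_minus_one[of 2] by (simp add: log_def le_divide_eq mult_left_le)
  then have "exp (- (a * log 2 n)) \<le> exp (- (a * ln n))"
    using assms by (simp add: mult_left_mono)
  also have "\<dots> = n powr (- a)" using assms by (simp add: powr_def)
  finally show ?thesis .
qed

lemma card_rank_less:
  fixes lt :: "'a \<Rightarrow> 'a \<Rightarrow> bool"
  assumes "finite V"
    and irrefl: "\<And>x. x \<in> V \<Longrightarrow> \<not> lt x x"
    and trans: "\<And>x y z. x \<in> V \<Longrightarrow> y \<in> V \<Longrightarrow> z \<in> V \<Longrightarrow> lt x y \<Longrightarrow> lt y z \<Longrightarrow> lt x z"
    and total: "\<And>x y. x \<in> V \<Longrightarrow> y \<in> V \<Longrightarrow> x \<noteq> y \<Longrightarrow> lt x y \<or> lt y x"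
  shows "card {x \<in> V. card {y \<in> V. lt y x} < m} = min m (card V)"
proof -
  define rank where "rank x = card {y \<in> V. lt y x}" for x
  have rank_less: "rank x < rank y" if "x \<in> V" "y \<in> V" "lt x y" for x y
  proof -
    have "{z \<in> V. lt z x} \<subset> {z \<in> V. lt z y}" using that irrefl trans by blast
    then show ?thesis unfolding rank_def using \<open>finite V\<close> by (simp add: psubset_card_mono)
  qed
  have "inj_on rank V"
  proof (rule inj_onI, rule ccontr)
    fix x y assume "x \<in> V" "y \<in> V" "rank x = rank y" "x \<noteq> y"
    then show False using total[of x y] rank_less[of x y] rank_less[of y x] by auto
  qed
  moreover have "rank x < card V" if "x \<in> V" for x
  proof -
    have "{y \<in> V. lt y x} \<subset> V" using that irrefl by blast
    then show ?thesis unfolding rank_def using \<open>finite V\<close> by (simp add: psubset_card_mono)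
  qed
  ultimately have "rank ` V = {..<card V}"
    using card_subset_eq[of "{..<card V}" "rank ` V"] card_image[of rank V] by auto
  moreover have "rank ` {x \<in> V. rank x < m} = rank ` V \<inter> {..<m}"
    by blast
  ultimately have "rank ` {x \<in> V. rank x < m} = {..<min m (card V)}"
    by (simp add: greaterThan_Int_greaterThan min.commute)
  moreover have "card (rank ` {x \<in> V. rank x < m}) = card {x \<in> V. rank x < m}"
    using inj_on_subset[OF \<open>inj_on rank V\<close>, of "{x \<in> V. rank x < m}"] by (simp add: card_image)
  ultimately show ?thesis
    unfolding rank_def[symmetric] by simp
qed

lemma Qset_subset: "Qset V E ID f i v \<subseteq> V"
  unfolding Qset_def by auto

lemma card_Qset:
  assumes "finite V" and "inj_on ID V"
  shows "card (Qset V E ID f i v) = min (nat \<lceil>real (card V) powr (real i / real f)\<rceil>) (card V)"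
  unfolding Qset_def
proof (rule card_rank_less[OF \<open>finite V\<close>])
  fix x y assume "x \<in> V" "y \<in> V" "x \<noteq> y"
  then have "ID x \<noteq> ID y" using \<open>inj_on ID V\<close> by (auto dest: inj_onD)
  then show "closer E ID v x y \<or> closer E ID v y x" unfolding closer_def by auto
next
  fix x y z assume "closer E ID v x y" "closer E ID v y z"
  then show "closer E ID v x z" unfolding closer_def by auto
qed (simp add: closer_def)

lemma card_Qset_ge:
  assumes "finite V" and "inj_on ID V" and "V \<noteq> {}" and "i \<le> f"
  shows "real (card (Qset V E ID f i v)) \<ge> real (card V) powr (real i / real f)"
proof -
  define x where "x = real (card V) powr (real i / real f)"
  have "card V \<ge> 1" using assms by (simp add: Suc_le_eq card_gt_0_iff)
  then have "x \<le> real (card V) powr 1"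
    unfolding x_def using \<open>i \<le> f\<close> by (intro powr_mono) (auto simp: divide_le_eq)
  moreover have "x \<le> real (nat \<lceil>x\<rceil>)" by (rule real_nat_ceiling_ge)
  ultimately show ?thesis
    using card_Qset[OF assms(1,2), of E f i v] \<open>card V \<ge> 1\<close> unfolding x_def[symmetric] by simp
qed

lemma card_Qset_le:
  assumes "finite V" and "inj_on ID V" and "V \<noteq> {}"
  shows "real (card (Qset V E ID f i v)) \<le> 2 * real (card V) powr (real i / real f)"
proof -
  define x where "x = real (card V) powr (real i / real f)"
  have "x \<ge> 1"
    unfolding x_def using assms by (intro ge_one_powr_ge_zero) (auto simp: Suc_le_eq card_gt_0_iff)
  then have "real (nat \<lceil>x\<rceil>) \<le> 2 * x" by linarith
  then show ?thesis
    using card_Qset[OF assms(1,2), of E f i v] unfolding x_def[symmetric] by simp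
qed

lemma samp_prob_nonneg:
  assumes "c \<ge> -3"
  shows "samp_prob n f c i \<ge> 0"
proof -
  have "log 2 (real n) \<ge> 0" by (cases "n = 0") (simp_all add: log_def)
  then show ?thesis using assms by (simp add: samp_prob_def)
qed

lemma samp_prob_le_one: "samp_prob n f c i \<le> 1"
  by (simp add: samp_prob_def)

lemma samp_prob_mult_powr:
  assumes "n > 0"
  shows "samp_prob n f c i * real n powr (real i / real f)
    = min ((c + 3) * log 2 (real n)) (real n powr (real i / real f))"
proof -
  define x where "x = real n powr (real i / real f)"
  have "x > 0" using assms by (simp add: x_def)
  have "samp_prob n f c i = min ((c + 3) * log 2 (real n) / x) 1"
    unfolding samp_prob_def x_def using assms by (simp add: powr_minus divide_inverse ac_simps)
  then show ?thesis
    unfolding x_def[symmetric] using \<open>x > 0\<close> by (simp add: min_mult_distrib_right)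
qed

lemma prob_Pi_pmf_all_eq:
  assumes "finite A" and "S \<subseteq> A"
  shows "measure_pmf.prob (Pi_pmf A d P) {\<omega>. \<forall>x\<in>S. \<omega> x = b} = (\<Prod>x\<in>S. pmf (P x) b)"
proof -
  have "{\<omega>. \<forall>x\<in>S. \<omega> x = b} = Pi A (\<lambda>x. if x \<in> S then {b} else UNIV)"
    using assms(2) by (auto simp: Pi_def)
  then have "measure_pmf.prob (Pi_pmf A d P) {\<omega>. \<forall>x\<in>S. \<omega> x = b}
      = (\<Prod>x\<in>A. if x \<in> S then pmf (P x) b else 1)"
    using assms(1) by (simp add: measure_Pi_pmf_Pi measure_pmf_single if_distrib cong: if_cong)
  also have "\<dots> = (\<Prod>x\<in>S. pmf (P x) b)"
    using assms by (simp add: prod.If_cases Int_absorb1)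
  finally show ?thesis .
qed

lemma prob_Pi_pmf_bernoulli_none:
  assumes "finite A" and "S \<subseteq> A" and "\<And>x. x \<in> S \<Longrightarrow> P x = bernoulli_pmf p"
    and "0 \<le> p" and "p \<le> 1"
  shows "measure_pmf.prob (Pi_pmf A d P) {\<omega>. \<forall>x\<in>S. \<not> \<omega> x} = (1 - p) ^ card S"
  using prob_Pi_pmf_all_eq[OF assms(1,2), of d P False] assms(3-5) by simp

lemma prob_Pi_pmf_bernoulli_count_ge:
  assumes "finite A" and "S \<subseteq> A" and "\<And>x. x \<in> S \<Longrightarrow> P x = bernoulli_pmf p"
    and "0 \<le> p" and "p \<le> 1"
  shows "measure_pmf.prob (Pi_pmf A d P) {\<omega>. t \<le> card {x\<in>S. \<omega> x}}
    \<le> real (card S choose t) * p ^ t"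
proof -
  define M where "M = Pi_pmf A d P"
  define Ts where "Ts = {T. T \<subseteq> S \<and> card T = t}"
  have "finite S" using assms(1,2) by (rule finite_subset[rotated])
  have "{\<omega>. t \<le> card {x\<in>S. \<omega> x}} \<subseteq> (\<Union>T\<in>Ts. {\<omega>. \<forall>x\<in>T. \<omega> x})"
  proof
    fix \<omega> assume "\<omega> \<in> {\<omega>. t \<le> card {x\<in>S. \<omega> x}}"
    then obtain T where "T \<subseteq> {x\<in>S. \<omega> x}" "card T = t"
      by (auto intro: obtain_subset_with_card_n)
    then show "\<omega> \<in> (\<Union>T\<in>Ts. {\<omega>. \<forall>x\<in>T. \<omega> x})" unfolding Ts_def by auto
  qed
  then have "measure_pmf.prob M {\<omega>. t \<le> card {x\<in>S. \<omega> x}}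
      \<le> measure_pmf.prob M (\<Union>T\<in>Ts. {\<omega>. \<forall>x\<in>T. \<omega> x})"
    by (intro measure_pmf.finite_measure_mono) auto
  also have "\<dots> \<le> (\<Sum>T\<in>Ts. measure_pmf.prob M {\<omega>. \<forall>x\<in>T. \<omega> x})"
    using \<open>finite S\<close> by (intro measure_pmf.finite_measure_subadditive_finite) (auto simp: Ts_def)
  also have "\<dots> = (\<Sum>T\<in>Ts. p ^ t)"
  proof (rule sum.cong[OF refl])
    fix T assume "T \<in> Ts"
    then have "T \<subseteq> A" "card T = t" "\<And>x. x \<in> T \<Longrightarrow> P x = bernoulli_pmf p"
      using assms(2,3) by (auto simp: Ts_def)
    then show "measure_pmf.prob M {\<omega>. \<forall>x\<in>T. \<omega> x} = p ^ t"
      using prob_Pi_pmf_all_eq[OF assms(1) \<open>T \<subseteq> A\<close>, of d P True] assms(4,5)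
      by (simp add: M_def)
  qed
  also have "\<dots> = real (card S choose t) * p ^ t"
    using n_subsets[OF \<open>finite S\<close>] by (simp add: Ts_def)
  finally show ?thesis unfolding M_def .
qed

lemma prob_sampling_level_none:
  assumes "finite V" and "i \<in> {1..<f}" and "Q \<subseteq> V" and "c \<ge> -3"
  shows "measure_pmf.prob (sampling V f c) {\<omega>. \<forall>x\<in>Q. \<not> \<omega> (i, x)}
    = (1 - samp_prob (card V) f c i) ^ card Q"
proof -
  have "{\<omega>. \<forall>x\<in>Q. \<not> \<omega> (i, x)} = {\<omega>. \<forall>y\<in>{i} \<times> Q. \<not> \<omega> y}" by auto
  moreover have "measure_pmf.prob (sampling V f c) {\<omega>. \<forall>y\<in>{i} \<times> Q. \<not> \<omega> y}
      = (1 - samp_prob (card V) f c i) ^ card ({i} \<times> Q)"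
    unfolding sampling_def using assms
    by (intro prob_Pi_pmf_bernoulli_none) (auto simp: samp_prob_nonneg samp_prob_le_one)
  ultimately show ?thesis by (simp add: card_cartesian_product_singleton)
qed

lemma prob_sampling_level_count_ge:
  assumes "finite V" and "i \<in> {1..<f}" and "Q \<subseteq> V" and "c \<ge> -3"
  shows "measure_pmf.prob (sampling V f c) {\<omega>. t \<le> card {x\<in>Q. \<omega> (i, x)}}
    \<le> real (card Q choose t) * samp_prob (card V) f c i ^ t"
proof -
  have "card {x\<in>Q. \<omega> (i, x)} = card {y\<in>{i} \<times> Q. \<omega> y}" for \<omega>
  proof -
    have "{y\<in>{i} \<times> Q. \<omega> y} = Pair i ` {x\<in>Q. \<omega> (i, x)}" by auto
    then show ?thesis by (simp add: card_image inj_on_def)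
  qed
  moreover have "measure_pmf.prob (sampling V f c) {\<omega>. t \<le> card {y\<in>{i} \<times> Q. \<omega> y}}
      \<le> real (card ({i} \<times> Q) choose t) * samp_prob (card V) f c i ^ t"
    unfolding sampling_def using assms
    by (intro prob_Pi_pmf_bernoulli_count_ge) (auto simp: samp_prob_nonneg samp_prob_le_one)
  ultimately show ?thesis by (simp add: card_cartesian_product_singleton)
qed

lemma Qset_inter_Aset:
  assumes "i \<noteq> 0"
  shows "Qset V E ID f j v \<inter> Aset V \<omega> i = {x \<in> Qset V E ID f j v. \<omega> (i, x)}"
  using assms Qset_subset[of V E ID f j v] by (auto simp: Aset_def)

definition load_bound :: "nat \<Rightarrow> nat \<Rightarrow> real \<Rightarrow> real" where
  "load_bound n f c = 12 * (c + 3) * real n powr (1 / real f) * log 2 (real n)"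

definition miss_event ::
  "'a set \<Rightarrow> ('a \<Rightarrow> 'a \<Rightarrow> bool) \<Rightarrow> ('a \<Rightarrow> nat) \<Rightarrow> nat \<Rightarrow> nat \<Rightarrow> 'a \<Rightarrow> (nat \<times> 'a \<Rightarrow> bool) set" where
  "miss_event V E ID f i v = {\<omega>. Qset V E ID f i v \<inter> Aset V \<omega> i = {}}"

definition overload_event :: "'a set \<Rightarrow> ('a \<Rightarrow> 'a \<Rightarrow> bool) \<Rightarrow> ('a \<Rightarrow> nat) \<Rightarrow> nat \<Rightarrow> real \<Rightarrow>
    nat \<Rightarrow> 'a \<Rightarrow> (nat \<times> 'a \<Rightarrow> bool) set" where
  "overload_event V E ID f c i v = {\<omega>. real_of_int \<lceil>load_bound (card V) f c\<rceil>
      < real (card (Qset V E ID f (i + 1) v \<inter> Aset V \<omega> i))}"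

lemma prob_miss_event_le:
  assumes "finite V" and "inj_on ID V" and "V \<noteq> {}" and "i \<in> {1..<f}" and "c \<ge> -3"
  shows "measure_pmf.prob (sampling V f c) (miss_event V E ID f i v) \<le> real (card V) powr (- (c + 3))"
proof -
  define n where "n = card V"
  define p where "p = samp_prob n f c i"
  define x where "x = real n powr (real i / real f)"
  define k where "k = card (Qset V E ID f i v)"
  have "n > 0" using assms by (simp add: n_def card_gt_0_iff)
  have "0 \<le> p" "p \<le> 1" using assms by (simp_all add: p_def samp_prob_nonneg samp_prob_le_one)
  have "real k \<ge> x" "x > 0"
    using card_Qset_ge[OF assms(1-3)] assms \<open>n > 0\<close> by (simp_all add: k_def x_def n_def)
  have "miss_event V E ID f i v = {\<omega>. \<forall>y\<in>Qset V E ID f i v. \<not> \<omega> (i, y)}"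
    using assms by (auto simp: miss_event_def Qset_inter_Aset)
  then have prob: "measure_pmf.prob (sampling V f c) (miss_event V E ID f i v) = (1 - p) ^ k"
    using prob_sampling_level_none[OF assms(1,4) Qset_subset assms(5)] by (simp add: p_def n_def k_def)
  show ?thesis
  proof (cases "p = 1")
    case True
    then show ?thesis using prob \<open>real k \<ge> x\<close> \<open>x > 0\<close> by (simp add: power_0_left)
  next
    case False
    \<comment> \<open>below probability one, p_i is exactly (c + 3) log n / n^(i/f)\<close>
    then have "p * x = (c + 3) * log 2 (real n)"
      using samp_prob_mult_powr[OF \<open>n > 0\<close>, of f c i] \<open>p \<le> 1\<close> \<open>x > 0\<close>
      by (auto simp: p_def x_def min_def split: if_splits)
    have "(1 - p) ^ k \<le> exp (- p) ^ k"
      using \<open>0 \<le> p\<close> \<open>p \<le> 1\<close> by (intro power_mono) (auto simp: exp_ge_add_one_self[of "- p", simplified])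
    also have "\<dots> = exp (- (p * real k))" by (simp add: exp_of_nat_mult[symmetric] mult.commute)
    also have "\<dots> \<le> exp (- (p * x))"
      using \<open>real k \<ge> x\<close> \<open>0 \<le> p\<close> by (simp add: mult_left_mono)
    also have "\<dots> \<le> real n powr (- (c + 3))"
      unfolding \<open>p * x = _\<close> using \<open>n > 0\<close> assms(5) by (intro exp_neg_mult_log_le_powr) auto
    finally show ?thesis using prob by (simp add: n_def)
  qed
qed

lemma card_Qset_mult_samp_prob_le_load_bound:
  assumes "finite V" and "inj_on ID V" and "V \<noteq> {}" and "c \<ge> -3"
  shows "6 * (real (card (Qset V E ID f (i + 1) v)) * samp_prob (card V) f c i) \<le> load_bound (card V) f c"
proof -
  define n where "n = card V"
  define p where "p = samp_prob n f c i"
  define x where "x = real n powr (real i / real f)"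
  define y where "y = real n powr (1 / real f)"
  have "n > 0" using assms by (simp add: n_def card_gt_0_iff)
  have "0 \<le> p" using assms by (simp add: p_def samp_prob_nonneg)
  have "y \<ge> 0" by (simp add: y_def)
  have "real (card (Qset V E ID f (i + 1) v)) \<le> 2 * (y * x)"
    using card_Qset_le[OF assms(1-3), of E f "i + 1" v] \<open>n > 0\<close>
    by (simp add: n_def x_def y_def powr_add[symmetric] add_divide_distrib)
  then have "real (card (Qset V E ID f (i + 1) v)) * p \<le> 2 * (y * x) * p"
    using \<open>0 \<le> p\<close> by (rule mult_right_mono)
  also have "\<dots> = 2 * y * (p * x)" by (simp add: ac_simps)
  also have "\<dots> \<le> 2 * y * ((c + 3) * log 2 (real n))"
    using samp_prob_mult_powr[OF \<open>n > 0\<close>, of f c i] \<open>y \<ge> 0\<close>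
    by (intro mult_left_mono) (simp_all add: p_def x_def)
  finally show ?thesis
    unfolding load_bound_def n_def[symmetric] p_def[symmetric] y_def by (simp add: algebra_simps)
qed

lemma prob_overload_event_le:
  assumes "finite V" and "inj_on ID V" and "V \<noteq> {}" and "i \<in> {1..<f}" and "c \<ge> -3"
  shows "measure_pmf.prob (sampling V f c) (overload_event V E ID f c i v)
    \<le> real (card V) powr (- (c + 3))"
proof -
  define n where "n = card V"
  define p where "p = samp_prob n f c i"
  define Q where "Q = Qset V E ID f (i + 1) v"
  define t where "t = nat \<lceil>load_bound n f c\<rceil>"
  have "n \<ge> 1" using assms by (simp add: n_def Suc_le_eq card_gt_0_iff)
  have "0 \<le> p" using assms by (simp add: p_def samp_prob_nonneg)
  have "load_bound n f c \<le> real t" unfolding t_def by linarith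
  then have mean_le_t: "6 * (real (card Q) * p) \<le> real t"
    using card_Qset_mult_samp_prob_le_load_bound[OF assms(1-3,5), of E f i v]
    unfolding Q_def p_def n_def by linarith
  have "real n powr (1 / real f) \<ge> 1"
    using \<open>n \<ge> 1\<close> by (intro ge_one_powr_ge_zero) auto
  then have "(c + 3) * log 2 (real n) * 1 \<le> (c + 3) * log 2 (real n) * (12 * real n powr (1 / real f))"
    using \<open>n \<ge> 1\<close> assms(5) by (intro mult_left_mono) auto
  with \<open>load_bound n f c \<le> real t\<close> have log_le_t: "(c + 3) * log 2 (real n) \<le> real t"
    by (simp add: load_bound_def algebra_simps)
  have "overload_event V E ID f c i v \<subseteq> {\<omega>. t \<le> card {z\<in>Q. \<omega> (i, z)}}"
    using assms(4) by (auto simp: overload_event_def t_def Q_def n_def Qset_inter_Aset nat_le_iff)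
  then have "measure_pmf.prob (sampling V f c) (overload_event V E ID f c i v)
      \<le> measure_pmf.prob (sampling V f c) {\<omega>. t \<le> card {z\<in>Q. \<omega> (i, z)}}"
    by (intro measure_pmf.finite_measure_mono) auto
  also have "\<dots> \<le> real (card Q choose t) * p ^ t"
    using prob_sampling_level_count_ge[OF assms(1,4) _ assms(5)] by (simp add: Q_def Qset_subset p_def n_def)
  also have "\<dots> \<le> (1 / 2) ^ t"
    using \<open>0 \<le> p\<close> mean_le_t by (rule binomial_mult_power_le_half_power)
  also have "\<dots> \<le> real n powr (- (c + 3))"
    using \<open>n \<ge> 1\<close> log_le_t by (intro half_power_le_powr) auto
  finally show ?thesis by (simp add: n_def)
qed

lemma card_Qset_inter_le_load_bound:
  assumes "finite V" and "inj_on ID V" and "card V \<ge> 2" and "c \<ge> 0"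
  shows "real (card (Qset V E ID f 1 v \<inter> A)) \<le> real_of_int \<lceil>load_bound (card V) f c\<rceil>"
proof -
  define y where "y = real (card V) powr (1 / real f)"
  have "V \<noteq> {}" using assms by auto
  have "y \<ge> 0" "log 2 (real (card V)) \<ge> 1" using assms by (simp_all add: y_def)
  have "card (Qset V E ID f 1 v \<inter> A) \<le> card (Qset V E ID f 1 v)"
    using assms(1) by (intro card_mono) (auto intro: finite_subset[OF Qset_subset])
  then have "real (card (Qset V E ID f 1 v \<inter> A)) \<le> 2 * y * 1"
    using card_Qset_le[OF assms(1,2) \<open>V \<noteq> {}\<close>, of E f 1 v] by (simp add: y_def)
  also have "\<dots> \<le> 2 * y * (6 * (c + 3) * log 2 (real (card V)))"
  proof (intro mult_left_mono)
    show "1 \<le> 6 * (c + 3) * log 2 (real (card V))"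
      using mult_mono[of 1 "6 * (c + 3)" 1 "log 2 (real (card V))"] assms(4)
        \<open>log 2 (real (card V)) \<ge> 1\<close> by simp
  qed (use \<open>y \<ge> 0\<close> in simp)
  also have "\<dots> = load_bound (card V) f c" by (simp add: load_bound_def y_def)
  also have "\<dots> \<le> real_of_int \<lceil>load_bound (card V) f c\<rceil>" by linarith
  finally show ?thesis .
qed

lemma not_good_sampling_subset:
  assumes "finite V" and "inj_on ID V" and "card V \<ge> 2" and "c \<ge> 0"
  shows "{\<omega>. \<not> good_sampling V E ID f c \<omega>}
    \<subseteq> (\<Union>(i, v)\<in>{1..<f} \<times> V. miss_event V E ID f i v \<union> overload_event V E ID f c i v)"
    (is "_ \<subseteq> ?bad")
proof
  fix \<omega> assume "\<omega> \<in> {\<omega>. \<not> good_sampling V E ID f c \<omega>}"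
  then consider
      (miss) i v where "i \<in> {1..<f}" "v \<in> V" "\<omega> \<in> miss_event V E ID f i v"
    | (overload) i v where "i \<in> {0..<f}" "v \<in> V" "\<omega> \<in> overload_event V E ID f c i v"
    unfolding good_sampling_def miss_event_def overload_event_def load_bound_def
    by (auto simp: not_le)
  then show "\<omega> \<in> ?bad"
  proof cases
    case (miss i v)
    then show ?thesis by blast
  next
    case (overload i v)
    \<comment> \<open>the level-0 bound holds for every outcome\<close>
    have "i \<noteq> 0"
    proof
      assume "i = 0"
      with overload show False
        using card_Qset_inter_le_load_bound[OF assms, of E f v "Aset V \<omega> 0"]
        by (simp add: overload_event_def)
    qed
    then show ?thesis using overload by auto
  qed
qed

lemma prob_miss_or_overload_event_le:
  assumes "finite V" and "inj_on ID V" and "V \<noteq> {}" and "i \<in> {1..<f}" and "c \<ge> -3"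
  shows "measure_pmf.prob (sampling V f c) (miss_event V E ID f i v \<union> overload_event V E ID f c i v)
    \<le> 2 * real (card V) powr (- (c + 3))"
  using prob_miss_event_le[OF assms, of E v] prob_overload_event_le[OF assms, of E v]
  by (intro order.trans[OF measure_Un_le]) auto

lemma sq_mult_twice_powr_le:
  fixes n m c :: real
  assumes "n \<ge> 2" and "m \<le> n\<^sup>2"
  shows "m * (2 * n powr (- (c + 3))) \<le> n powr (- c)"
proof -
  have "m * (2 * n powr (- (c + 3))) \<le> n powr 2 * (2 * n powr (- (c + 3)))"
    using assms by (intro mult_right_mono) (auto simp: powr_numeral)
  also have "\<dots> = 2 * (n powr (- 1) * n powr (- c))"
    by (simp only: powr_add[symmetric] mult.assoc mult.left_commute[of "n powr 2"]) (simp add: algebra_simps)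
  also have "\<dots> = 2 / n * n powr (- c)"
    using assms by (simp add: powr_neg_one)
  also have "\<dots> \<le> n powr (- c)"
    using assms by (intro mult_left_le_one_le) auto
  finally show ?thesis .
qed

theorem mainTheorem8:
  fixes V :: "'a set" and E :: "'a \<Rightarrow> 'a \<Rightarrow> bool" and ID :: "'a \<Rightarrow> nat"
    and f :: nat and c :: real
  assumes "finite V"
    and "\<And>x y. E x y \<Longrightarrow> x \<in> V \<and> y \<in> V"
    and "\<And>x y. E x y \<Longrightarrow> E y x"
    and "\<And>x. \<not> E x x"
    and "inj_on ID V"
    and "f > 0" and "card V > f"
    and "c \<ge> 1"
  shows "measure_pmf.prob (sampling V f c) {\<omega>. good_sampling V E ID f c \<omega>}
           \<ge> 1 - real (card V) powr (- c)"
proof -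
  define n where "n = card V"
  define M where "M = sampling V f c"
  define bad where "bad = (\<lambda>(i, v). miss_event V E ID f i v \<union> overload_event V E ID f c i v)"
  have "n \<ge> 2" "V \<noteq> {}" "c \<ge> -3" "c \<ge> 0" using assms(6-8) by (auto simp: n_def)
  have "measure_pmf.prob M {\<omega>. \<not> good_sampling V E ID f c \<omega>} \<le> measure_pmf.prob M (\<Union> (bad ` ({1..<f} \<times> V)))"
    using not_good_sampling_subset[OF assms(1,5)] \<open>n \<ge> 2\<close> \<open>c \<ge> 0\<close>
    by (intro measure_pmf.finite_measure_mono) (auto simp: bad_def n_def)
  also have "\<dots> \<le> (\<Sum>iv\<in>{1..<f} \<times> V. measure_pmf.prob M (bad iv))"
    using assms(1) by (intro measure_pmf.finite_measure_subadditive_finite) auto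
  also have "\<dots> \<le> (\<Sum>iv\<in>{1..<f} \<times> V. 2 * real n powr (- (c + 3)))"
    using prob_miss_or_overload_event_le[OF assms(1,5) \<open>V \<noteq> {}\<close> _ \<open>c \<ge> -3\<close>]
    by (intro sum_mono) (auto simp: M_def bad_def n_def)
  also have "\<dots> = real ((f - 1) * n) * (2 * real n powr (- (c + 3)))"
    by (simp add: n_def card_cartesian_product)
  also have "\<dots> \<le> real n powr (- c)"
    using \<open>n \<ge> 2\<close> assms(7) by (intro sq_mult_twice_powr_le) (auto simp: n_def power2_eq_square)
  finally show ?thesis
    using measure_pmf.prob_compl[of "{\<omega>. \<not> good_sampling V E ID f c \<omega>}" M]
    by (simp add: M_def n_def Compl_eq_Diff_UNIV[symmetric] Collect_neg_eq[symmetric])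
qed

end
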